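(* Let $E: y^2=x^3+Ax+B$ ($A,B\in\mathbb{Z}$) be an elliptic curve over $\mathbb{Q}$ and let $M$ be a positive integer with $\max\{10\sqrt{|A|},5\sqrt[3]{|B|}\}\le M$. There exists $D_0$ depending only on $E$ (and $M$) such that for every squarefree integer $D\ge D_0$ and every point $P\in E_D(\mathbb{Z})$ with $x(P)\le MD$, where $E_D: y^2=x^3+D^2Ax+D^3B$, we have $\hat h(P)<1.5\log D$.
   Context: $h$ is the absolute logarithmic Weil height on $\overline{\mathbb{Q}}$; for a point $P$ on an elliptic curve in Weierstrass form, $\hat h(P)=\lim_{n\to\infty} h(x(2^nP))/4^n$ (the canonical height, not normalized by the factor $1/2$). $E_D(\mathbb{Z})$ is the set of points of $E_D$ with integer coordinates. *)

theory Defs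
  imports Complex_Main "HOL-Computational_Algebra.Squarefree"
begin

definition weil_height_rat :: "rat \<Rightarrow> real" where
  "weil_height_rat r = (case quotient_of r of (p, q) \<Rightarrow> ln (real_of_int (max \<bar>p\<bar> \<bar>q\<bar>)))"

text \<open>x-coordinate of 2P on y^2 = x^3 + a x + b in terms of x = x(P);
  None encodes the point at infinity O.\<close>
definition x_double :: "rat \<Rightarrow> rat \<Rightarrow> rat \<Rightarrow> rat option" where
  "x_double a b x = (if x^3 + a*x + b = 0 then None
     else Some ((x^4 - 2*a*x^2 - 8*b*x + a^2) / (4*(x^3 + a*x + b))))"

fun x_iter :: "rat \<Rightarrow> rat \<Rightarrow> nat \<Rightarrow> rat \<Rightarrow> rat option" where
  "x_iter a b 0 x = Some x"
| "x_iter a b (Suc n) x = Option.bind (x_iter a b n x) (x_double a b)"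

definition height_opt :: "rat option \<Rightarrow> real" where
  "height_opt p = (case p of None \<Rightarrow> 0 | Some r \<Rightarrow> weil_height_rat r)"

text \<open>Canonical height (not normalised by 1/2) of an affine point with x-coordinate x
  on y^2 = x^3 + a x + b: lim h(x(2^n P)) / 4^n.\<close>
definition canonical_height :: "rat \<Rightarrow> rat \<Rightarrow> rat \<Rightarrow> real" where
  "canonical_height a b x = lim (\<lambda>n. height_opt (x_iter a b n x) / 4 ^ n)"

end

theory Submission
  imports Defs
begin

(* Write x(P) = p/q in lowest terms and m = max(|p|, |q|). The duplication formula gives
   x(2P) = F(p, q) / G(p, q) for integral binary quartic forms F, G, so max(|F|, |G|) = O(m^4).
   Conversely, cubic cofactors combine F and G into 4 (4a^3 + 27b^2) p^7 and 4 (4a^3 + 27b^2) q^7;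
   this bounds gcd(F, G) by the discriminant and max(|F|, |G|) from below by a multiple of m^4.
   Hence h(x(2P)) = 4 h(x(P)) + O(1), and Tate's telescoping sum shows that the canonical height
   differs from h(x(P)) by a bounded amount.
   The duplication map of E_D is conjugate to that of E under x -> D x, and multiplication by D
   changes heights by at most log D, so a point of E_D with abscissa x has canonical height at
   most log max(|x|, D) + O(1). For an integral point with x <= M D the curve equation gives
   -x <= (|A| + |B| + 1) D, so the canonical height is log D + O(1) < 1.5 log D for large D. *)

lemma weil_height_rat_quotient_of:
  assumes "quotient_of r = (p, q)"
  shows "weil_height_rat r = ln (real_of_int (max \<bar>p\<bar> q))"
  using assms quotient_of_denom_pos[OF assms] unfolding weil_height_rat_def by simp

lemma weil_height_rat_nonneg: "weil_height_rat r \<ge> 0"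
proof -
  obtain p q where pq: "quotient_of r = (p, q)" by fastforce
  then have "q > 0" by (rule quotient_of_denom_pos)
  then show ?thesis using weil_height_rat_quotient_of[OF pq] by simp
qed

lemma weil_height_rat_of_int_fraction:
  fixes p q :: int
  assumes "q \<noteq> 0"
  shows "weil_height_rat (of_int p / of_int q) = ln (max \<bar>p\<bar> \<bar>q\<bar>) - ln (gcd p q)"
proof -
  obtain p' q' where pq: "quotient_of (of_int p / of_int q) = (p', q')" by fastforce
  have q': "q' > 0" and cop: "coprime p' q'" and eq: "(of_int p / of_int q :: rat) = of_int p' / of_int q'"
    using quotient_of_denom_pos[OF pq] quotient_of_coprime[OF pq] quotient_of_div[OF pq] by auto
  have "p' * q = p * q'"
    using eq assms q' by (simp add: field_simps flip: of_int_mult of_int_eq_iff)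
  then have "q' dvd q"
    using cop by (metis coprime_commute coprime_dvd_mult_right_iff dvd_triv_right)
  then obtain k where k: "q = q' * k" by blast
  with \<open>p' * q = p * q'\<close> q' have p: "p = p' * k" by (simp add: algebra_simps)
  have "k \<noteq> 0" using k assms by auto
  have "gcd p q = \<bar>k\<bar>"
    using cop by (simp add: p k gcd_mult_right abs_mult coprime_iff_gcd_eq_1 gcd.commute)
  moreover have "max \<bar>p\<bar> \<bar>q\<bar> = \<bar>k\<bar> * max \<bar>p'\<bar> q'"
    using q' by (simp add: p k abs_mult max_mult_distrib_left mult.commute)
  moreover have "max \<bar>p'\<bar> q' > 0" using q' by simp
  ultimately show ?thesis
    using weil_height_rat_quotient_of[OF pq] \<open>k \<noteq> 0\<close> by (simp add: ln_mult)
qed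

lemma weil_height_rat_of_int_fraction_le:
  fixes p q :: int
  assumes "q \<noteq> 0"
  shows "weil_height_rat (of_int p / of_int q) \<le> ln (max \<bar>p\<bar> \<bar>q\<bar>)"
proof -
  have "gcd p q \<ge> 1" using assms by (simp add: int_one_le_iff_zero_less)
  then show ?thesis using weil_height_rat_of_int_fraction[OF assms, of p] by simp
qed

lemma weil_height_rat_mult_le: "weil_height_rat (r * s) \<le> weil_height_rat r + weil_height_rat s"
proof -
  obtain p q where pq: "quotient_of r = (p, q)" by fastforce
  obtain p' q' where pq': "quotient_of s = (p', q')" by fastforce
  have q: "q > 0" "q' > 0" using quotient_of_denom_pos pq pq' by blast+
  have "r * s = of_int (p * p') / of_int (q * q')"
    using quotient_of_div[OF pq] quotient_of_div[OF pq'] by simp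
  then have "weil_height_rat (r * s) \<le> ln (max \<bar>p * p'\<bar> \<bar>q * q'\<bar>)"
    using weil_height_rat_of_int_fraction_le[of "q * q'" "p * p'"] q by simp
  also have "\<dots> \<le> ln (max \<bar>p\<bar> q * max \<bar>p'\<bar> q')"
    using q by (intro ln_mono) (auto simp: abs_mult less_max_iff_disj mult_mono simp flip: of_int_mult)
  also have "\<dots> = weil_height_rat r + weil_height_rat s"
    using q by (simp add: weil_height_rat_quotient_of[OF pq] weil_height_rat_quotient_of[OF pq'])
      (auto simp: ln_mult max_def)
  finally show ?thesis .
qed

lemma weil_height_rat_inverse: "weil_height_rat (inverse r) = weil_height_rat r"
proof (cases "r = 0")
  case False
  obtain p q where pq: "quotient_of r = (p, q)" by fastforce
  have r: "r = of_int p / of_int q" and "q > 0" using quotient_of_div[OF pq] quotient_of_denom_pos[OF pq] by auto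
  with False have "p \<noteq> 0" by auto
  have "weil_height_rat (inverse r) = weil_height_rat (of_int q / of_int p)" by (simp add: r)
  also have "\<dots> = weil_height_rat r"
    using \<open>p \<noteq> 0\<close> \<open>q > 0\<close> by (simp add: r weil_height_rat_of_int_fraction gcd.commute max.commute)
  finally show ?thesis .
qed simp

lemma abs_weil_height_rat_mult_diff_le:
  assumes "r \<noteq> 0"
  shows "\<bar>weil_height_rat (r * s) - weil_height_rat s\<bar> \<le> weil_height_rat r"
proof -
  have "weil_height_rat s = weil_height_rat (inverse r * (r * s))" using assms by (simp add: field_simps)
  also have "\<dots> \<le> weil_height_rat r + weil_height_rat (r * s)"
    using weil_height_rat_mult_le weil_height_rat_inverse by metis
  finally show ?thesis using weil_height_rat_mult_le[of r s] by linarith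
qed

fun binary_form :: "'a::comm_semiring_1 list \<Rightarrow> 'a \<Rightarrow> 'a \<Rightarrow> 'a" where
  "binary_form [] p q = 0"
| "binary_form (c # cs) p q = c * p ^ length cs + q * binary_form cs p q"

lemma abs_binary_form_le:
  fixes p q m :: "'a::linordered_idom"
  assumes p: "\<bar>p\<bar> \<le> m" and q: "\<bar>q\<bar> \<le> m" and "1 \<le> m" and "sum_list (map abs cs) \<le> K"
  shows "\<bar>binary_form cs p q\<bar> \<le> K * m ^ (length cs - 1)"
  using assms(4)
proof (induction cs arbitrary: K)
  case (Cons c cs)
  show ?case
  proof (cases "cs = []")
    case False
    then obtain n where n: "length cs = Suc n" by (cases cs) auto
    have "\<bar>c * p ^ length cs\<bar> \<le> \<bar>c\<bar> * m ^ length cs"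
      using p by (simp add: abs_mult power_abs mult_left_mono power_mono)
    moreover have "\<bar>q * binary_form cs p q\<bar> \<le> m * (sum_list (map abs cs) * m ^ n)"
      using Cons.IH[of "sum_list (map abs cs)"] q n by (simp add: abs_mult mult_mono)
    moreover have "(\<bar>c\<bar> + sum_list (map abs cs)) * m ^ length cs \<le> K * m ^ length cs"
      using Cons.prems \<open>1 \<le> m\<close> by (intro mult_right_mono) simp_all
    ultimately show ?thesis
      using n by (simp add: algebra_simps order_trans[OF abs_triangle_ineq])
  qed (use Cons.prems in simp)
qed simp

lemma abs_linear_combination_le:
  fixes u v F G U :: "'a::linordered_idom"
  assumes "\<bar>u\<bar> \<le> U" "\<bar>v\<bar> \<le> U"
  shows "\<bar>u * F + v * G\<bar> \<le> 2 * U * max \<bar>F\<bar> \<bar>G\<bar>"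
proof -
  have "\<bar>u * F + v * G\<bar> \<le> \<bar>u\<bar> * \<bar>F\<bar> + \<bar>v\<bar> * \<bar>G\<bar>"
    by (metis abs_mult abs_triangle_ineq)
  also have "\<dots> \<le> U * max \<bar>F\<bar> \<bar>G\<bar> + U * max \<bar>F\<bar> \<bar>G\<bar>"
    using assms by (intro add_mono mult_mono) auto
  finally show ?thesis by simp
qed

lemma weil_height_rat_fraction_ge_by_resultant:
  fixes F G R p q u\<^sub>1 v\<^sub>1 u\<^sub>2 v\<^sub>2 U :: int
  assumes "u\<^sub>1 * F + v\<^sub>1 * G = R * p^k" and "u\<^sub>2 * F + v\<^sub>2 * G = R * q^k"
    and "coprime p q" and "R \<noteq> 0" and "G \<noteq> 0"
    and "\<bar>u\<^sub>1\<bar> \<le> U" "\<bar>v\<^sub>1\<bar> \<le> U" "\<bar>u\<^sub>2\<bar> \<le> U" "\<bar>v\<^sub>2\<bar> \<le> U"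
  shows "k * ln (max \<bar>p\<bar> \<bar>q\<bar>) - ln (2 * U) \<le> weil_height_rat (of_int F / of_int G)"
proof -
  define m where "m = max \<bar>p\<bar> \<bar>q\<bar>"
  define N where "N = max \<bar>F\<bar> \<bar>G\<bar>"
  have "m > 0" using \<open>coprime p q\<close> unfolding m_def by (cases "p = 0") auto
  have "gcd F G dvd gcd (R * p^k) (R * q^k)"
    using assms(1,2) by (metis dvd_add dvd_mult gcd_dvd1 gcd_dvd2 gcd_greatest)
  also have "gcd (R * p^k) (R * q^k) = \<bar>R\<bar>"
    using \<open>coprime p q\<close> by (simp add: gcd_mult_left)
  finally have gcd_le: "gcd F G \<le> \<bar>R\<bar>" using \<open>R \<noteq> 0\<close> by (intro zdvd_imp_le) auto
  have bound: "\<bar>R\<bar> * m^k \<le> 2 * U * N"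
  proof (cases "\<bar>q\<bar> \<le> \<bar>p\<bar>")
    case True
    then have "\<bar>R\<bar> * m^k = \<bar>u\<^sub>1 * F + v\<^sub>1 * G\<bar>" by (simp add: m_def assms(1) abs_mult power_abs)
    then show ?thesis unfolding N_def using abs_linear_combination_le assms(6,7) by metis
  next
    case False
    then have "\<bar>R\<bar> * m^k = \<bar>u\<^sub>2 * F + v\<^sub>2 * G\<bar>" by (simp add: m_def assms(2) abs_mult power_abs)
    then show ?thesis unfolding N_def using abs_linear_combination_le assms(8,9) by metis
  qed
  have "N > 0" using \<open>G \<noteq> 0\<close> unfolding N_def by (simp add: less_max_iff_disj)
  have "0 < \<bar>R\<bar> * m^k" using \<open>R \<noteq> 0\<close> \<open>m > 0\<close> by simp
  with bound \<open>N > 0\<close> have "U > 0" by (smt (verit) zero_less_mult_iff)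
  from bound \<open>0 < \<bar>R\<bar> * m^k\<close> have "ln (\<bar>R\<bar> * m^k) \<le> ln (2 * U * N)"
    by (intro ln_mono) (simp_all only: of_int_le_iff of_int_0_less_iff)
  then have "ln \<bar>R\<bar> + k * ln m \<le> ln (2 * U) + ln N"
    using \<open>R \<noteq> 0\<close> \<open>m > 0\<close> \<open>N > 0\<close> \<open>U > 0\<close> by (simp add: ln_mult ln_realpow)
  moreover have "ln (gcd F G) \<le> ln \<bar>R\<bar>"
    using gcd_le \<open>G \<noteq> 0\<close> by (intro ln_mono) (simp_all flip: of_int_abs)
  ultimately show ?thesis
    using weil_height_rat_of_int_fraction[OF \<open>G \<noteq> 0\<close>, of F] unfolding m_def N_def by linarith
qed

lemma cubic_le_imp_le:
  fixes s \<alpha> \<beta> :: "'a::linordered_idom"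
  assumes "0 \<le> \<alpha>" "0 \<le> \<beta>" and "s^3 \<le> \<alpha> * s + \<beta>"
  shows "s \<le> \<alpha> + \<beta> + 1"
proof (cases "s \<le> 1")
  case False
  then have "s * s^2 \<le> s * (\<alpha> + \<beta>)"
    using assms mult_left_mono[of 1 s \<beta>] by (simp add: power3_eq_cube power2_eq_square algebra_simps)
  then have "s^2 \<le> \<alpha> + \<beta>" using False by simp
  moreover have "s \<le> s^2" using False by (simp add: power2_eq_square)
  ultimately show ?thesis by simp
qed (use assms in simp)

lemma weil_height_rat_cubic_root_le:
  fixes a b :: int
  assumes "r^3 + of_int a * r + of_int b = 0"
  shows "weil_height_rat r \<le> ln (\<bar>a\<bar> + \<bar>b\<bar> + 1)"
proof -
  obtain p q where pq: "quotient_of r = (p, q)" by fastforce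
  have q: "q > 0" and cop: "coprime p q" and r: "r = of_int p / of_int q"
    using quotient_of_denom_pos[OF pq] quotient_of_coprime[OF pq] quotient_of_div[OF pq] by auto
  have "of_int (p^3 + a*p*q^2 + b*q^3) = (of_int q)^3 * (r^3 + of_int a * r + of_int b)"
    using q by (simp add: r field_simps power2_eq_square power3_eq_cube)
  with assms have Y: "p^3 = q * (- a*p*q - b*q^2)"
    by (simp only: mult_zero_right of_int_eq_0_iff) (simp add: algebra_simps power2_eq_square power3_eq_cube)
  then have "q dvd p^3" by simp
  moreover have "coprime (p^3) q" using cop by simp
  ultimately have "is_unit q" by (metis coprime_absorb_left coprime_commute)
  with q have "q = 1" by simp
  with Y have "\<bar>p\<bar>^3 = \<bar>a * p + b\<bar>" by (simp flip: power_abs add: abs_minus_commute)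
  also have "\<dots> \<le> \<bar>a\<bar> * \<bar>p\<bar> + \<bar>b\<bar>" by (metis abs_mult abs_triangle_ineq)
  finally have "\<bar>p\<bar>^3 \<le> \<bar>a\<bar> * \<bar>p\<bar> + \<bar>b\<bar>" .
  then have "\<bar>p\<bar> \<le> \<bar>a\<bar> + \<bar>b\<bar> + 1" by (rule cubic_le_imp_le[rotated 2]) simp_all
  then show ?thesis
    using weil_height_rat_quotient_of[OF pq] \<open>q = 1\<close> by simp
qed

(* Coefficients of the homogenised numerator x^4 - 2ax^2 - 8bx + a^2 and denominator
   4 (x^3 + ax + b) of the duplication formula x_double. *)
definition doubling_numerator :: "int \<Rightarrow> int \<Rightarrow> int list" where
  "doubling_numerator a b = [1, 0, -2*a, -8*b, a^2]"

definition doubling_denominator :: "int \<Rightarrow> int \<Rightarrow> int list" where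
  "doubling_denominator a b = [0, 4, 0, 4*a, 4*b]"

abbreviation x_double_fraction :: "int \<Rightarrow> int \<Rightarrow> int \<Rightarrow> int \<Rightarrow> rat" where
  "x_double_fraction a b p q \<equiv>
    of_int (binary_form (doubling_numerator a b) p q) / of_int (binary_form (doubling_denominator a b) p q)"

lemma binary_form_doubling_denominator:
  "binary_form (doubling_denominator a b) p q = 4 * q * (p^3 + a*p*q^2 + b*q^3)"
  unfolding doubling_denominator_def by (simp; algebra)

lemma x_double_of_int_fraction:
  fixes a b p q :: int
  assumes "q \<noteq> 0"
  shows "x_double (of_int a) (of_int b) (of_int p / of_int q) =
    (if p^3 + a*p*q^2 + b*q^3 = 0 then None
     else Some (x_double_fraction a b p q))"
proof -
  define r :: rat where "r = of_int p / of_int q"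
  define Y where "Y = p^3 + a*p*q^2 + b*q^3"
  define F where "F = binary_form (doubling_numerator a b) p q"
  have q: "(of_int q :: rat) \<noteq> 0" using assms by simp
  have cubic: "r^3 + of_int a * r + of_int b = of_int Y / (of_int q)^3"
    using q unfolding r_def Y_def by (simp add: field_simps power2_eq_square power3_eq_cube)
  have quartic: "r^4 - 2 * of_int a * r^2 - 8 * of_int b * r + (of_int a)^2 = of_int F / (of_int q)^4"
    using q unfolding r_def F_def doubling_numerator_def
    by (simp add: field_simps power2_eq_square power3_eq_cube power4_eq_xxxx)
  have "of_int F / (of_int q)^4 / (4 * (of_int Y / (of_int q)^3)) = (of_int F / of_int (4 * q * Y) :: rat)"
    using q by (cases "Y = 0") (simp_all add: field_simps power3_eq_cube power4_eq_xxxx)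
  then show ?thesis
    using q unfolding x_double_def r_def[symmetric] cubic quartic binary_form_doubling_denominator
      Y_def[symmetric] F_def[symmetric] by simp
qed

lemma doubling_resultant_certificate:
  fixes a b :: int
  obtains u\<^sub>1 v\<^sub>1 u\<^sub>2 v\<^sub>2 :: "int list"
  where "length u\<^sub>1 = 4" "length v\<^sub>1 = 4" "length u\<^sub>2 = 4" "length v\<^sub>2 = 4"
    and "\<And>p q. binary_form u\<^sub>1 p q * binary_form (doubling_numerator a b) p q
        + binary_form v\<^sub>1 p q * binary_form (doubling_denominator a b) p q = 4*(4*a^3 + 27*b^2) * p^7"
    and "\<And>p q. binary_form u\<^sub>2 p q * binary_form (doubling_numerator a b) p q
        + binary_form v\<^sub>2 p q * binary_form (doubling_denominator a b) p q = 4*(4*a^3 + 27*b^2) * q^7"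
proof -
  define u\<^sub>1 where "u\<^sub>1 = [4*(4*a^3 + 27*b^2), -4*a^2*b, 4*a*(3*a^3 + 22*b^2), 12*b*(a^3 + 8*b^2)]"
  define v\<^sub>1 where "v\<^sub>1 = [a^2*b, a*(5*a^3 + 32*b^2), 2*b*(13*a^3 + 96*b^2), -3*a^2*(a^3 + 8*b^2)]"
  define u\<^sub>2 where "u\<^sub>2 = [0, 12, 0, 16*a]"
  define v\<^sub>2 where "v\<^sub>2 = [-3, 0, 5*a, 27*b]"
  have "binary_form u\<^sub>1 p q * binary_form (doubling_numerator a b) p q
      + binary_form v\<^sub>1 p q * binary_form (doubling_denominator a b) p q = 4*(4*a^3 + 27*b^2) * p^7"
    "binary_form u\<^sub>2 p q * binary_form (doubling_numerator a b) p q
      + binary_form v\<^sub>2 p q * binary_form (doubling_denominator a b) p q = 4*(4*a^3 + 27*b^2) * q^7"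
    for p q
    unfolding u\<^sub>1_def v\<^sub>1_def u\<^sub>2_def v\<^sub>2_def doubling_numerator_def doubling_denominator_def
    by (simp; algebra)+
  moreover have "length u\<^sub>1 = 4" "length v\<^sub>1 = 4" "length u\<^sub>2 = 4" "length v\<^sub>2 = 4"
    by (simp_all add: u\<^sub>1_def v\<^sub>1_def u\<^sub>2_def v\<^sub>2_def)
  ultimately show ?thesis using that by blast
qed

lemma weil_height_x_double_fraction_le:
  fixes a b p q :: int
  assumes "q \<noteq> 0" and "p^3 + a*p*q^2 + b*q^3 \<noteq> 0"
  defines "K \<equiv> sum_list (map abs (doubling_numerator a b @ doubling_denominator a b))"
  shows "weil_height_rat (x_double_fraction a b p q) \<le> 4 * ln (max \<bar>p\<bar> \<bar>q\<bar>) + ln K"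
proof -
  define F where "F = binary_form (doubling_numerator a b) p q"
  define G where "G = binary_form (doubling_denominator a b) p q"
  define m where "m = max \<bar>p\<bar> \<bar>q\<bar>"
  have m: "\<bar>p\<bar> \<le> m" "\<bar>q\<bar> \<le> m" "1 \<le> m" using \<open>q \<noteq> 0\<close> unfolding m_def by auto
  have "G \<noteq> 0" using assms unfolding G_def binary_form_doubling_denominator by simp
  have "K \<ge> 1" unfolding K_def doubling_numerator_def doubling_denominator_def by simp
  have "\<bar>F\<bar> \<le> K * m^4" "\<bar>G\<bar> \<le> K * m^4"
    using abs_binary_form_le[OF m, of "doubling_numerator a b" K]
      abs_binary_form_le[OF m, of "doubling_denominator a b" K]
    unfolding F_def G_def K_def
    by (simp_all add: sum_list_nonneg doubling_numerator_def doubling_denominator_def power4_eq_xxxx mult.assoc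
        del: binary_form.simps)
  then have "max \<bar>F\<bar> \<bar>G\<bar> \<le> K * m^4" by simp
  moreover have "0 < max \<bar>F\<bar> \<bar>G\<bar>" using \<open>G \<noteq> 0\<close> by (simp add: less_max_iff_disj)
  ultimately have "ln (max \<bar>F\<bar> \<bar>G\<bar>) \<le> ln (K * m^4)"
    by (intro ln_mono) (simp_all only: of_int_le_iff of_int_0_less_iff)
  also have "\<dots> = 4 * ln m + ln K" using \<open>K \<ge> 1\<close> m(3) by (simp add: ln_mult ln_realpow)
  finally show ?thesis
    using weil_height_rat_of_int_fraction_le[OF \<open>G \<noteq> 0\<close>, of F] unfolding F_def G_def m_def by linarith
qed

lemma weil_height_x_double_fraction_ge:
  fixes a b :: int
  assumes "4*a^3 + 27*b^2 \<noteq> 0"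
  obtains C where "\<And>p q :: int. coprime p q \<Longrightarrow> q \<noteq> 0 \<Longrightarrow> p^3 + a*p*q^2 + b*q^3 \<noteq> 0 \<Longrightarrow>
    4 * ln (max \<bar>p\<bar> \<bar>q\<bar>) - C \<le> weil_height_rat (x_double_fraction a b p q)"
proof -
  obtain u\<^sub>1 v\<^sub>1 u\<^sub>2 v\<^sub>2 where len: "length u\<^sub>1 = 4" "length v\<^sub>1 = 4" "length u\<^sub>2 = 4" "length v\<^sub>2 = 4"
    and resultant:
      "\<And>p q. binary_form u\<^sub>1 p q * binary_form (doubling_numerator a b) p q
        + binary_form v\<^sub>1 p q * binary_form (doubling_denominator a b) p q = 4*(4*a^3 + 27*b^2) * p^7"
      "\<And>p q. binary_form u\<^sub>2 p q * binary_form (doubling_numerator a b) p q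
        + binary_form v\<^sub>2 p q * binary_form (doubling_denominator a b) p q = 4*(4*a^3 + 27*b^2) * q^7"
    using doubling_resultant_certificate[of a b] by blast
  define K where "K = sum_list (map abs (u\<^sub>1 @ v\<^sub>1 @ u\<^sub>2 @ v\<^sub>2)) + 1"
  have coeff_nonneg: "0 \<le> sum_list (map abs cs)" for cs :: "int list"
    by (induction cs) auto
  then have "K \<ge> 1" unfolding K_def by (metis le_add_same_cancel2)
  have coeff_le: "sum_list (map abs cs) \<le> K" if "cs \<in> {u\<^sub>1, v\<^sub>1, u\<^sub>2, v\<^sub>2}" for cs
    using that coeff_nonneg[of u\<^sub>1] coeff_nonneg[of v\<^sub>1] coeff_nonneg[of u\<^sub>2] coeff_nonneg[of v\<^sub>2]
    by (auto simp: K_def)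
  have "4 * ln (max \<bar>p\<bar> \<bar>q\<bar>) - ln (2 * K) \<le> weil_height_rat (x_double_fraction a b p q)"
    if "coprime p q" "q \<noteq> 0" "p^3 + a*p*q^2 + b*q^3 \<noteq> 0" for p q :: int
  proof -
    define m where "m = max \<bar>p\<bar> \<bar>q\<bar>"
    have m: "\<bar>p\<bar> \<le> m" "\<bar>q\<bar> \<le> m" "1 \<le> m" using \<open>q \<noteq> 0\<close> unfolding m_def by auto
    have "binary_form (doubling_denominator a b) p q \<noteq> 0"
      using that unfolding binary_form_doubling_denominator by simp
    moreover have "\<bar>binary_form cs p q\<bar> \<le> K * m^3" if "cs \<in> {u\<^sub>1, v\<^sub>1, u\<^sub>2, v\<^sub>2}" for cs
      using abs_binary_form_le[OF m coeff_le[OF that]] that len by auto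
    ultimately have "real 7 * ln m - ln (2 * (K * m^3))
        \<le> weil_height_rat (x_double_fraction a b p q)"
      using weil_height_rat_fraction_ge_by_resultant[OF resultant \<open>coprime p q\<close>, of "K * m^3"] assms
      unfolding m_def by simp
    moreover have "ln (2 * (K * m^3)) = ln (2 * K) + 3 * ln m"
      using \<open>K \<ge> 1\<close> m(3) by (simp add: ln_mult ln_realpow mult.assoc[symmetric])
    ultimately show ?thesis unfolding m_def by simp
  qed
  with that show ?thesis by blast
qed

lemma height_x_double_bound:
  fixes a b :: int
  assumes "4*a^3 + 27*b^2 \<noteq> 0"
  obtains C where "\<And>r. \<bar>height_opt (x_double (of_int a) (of_int b) r) - 4 * weil_height_rat r\<bar> \<le> C"
proof -
  define K where "K = sum_list (map abs (doubling_numerator a b @ doubling_denominator a b))"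
  obtain C where C: "\<And>p q :: int. coprime p q \<Longrightarrow> q \<noteq> 0 \<Longrightarrow> p^3 + a*p*q^2 + b*q^3 \<noteq> 0 \<Longrightarrow>
    4 * ln (max \<bar>p\<bar> \<bar>q\<bar>) - C \<le> weil_height_rat (x_double_fraction a b p q)"
    using weil_height_x_double_fraction_ge[OF assms] by blast
  have "\<bar>height_opt (x_double (of_int a) (of_int b) r) - 4 * weil_height_rat r\<bar>
      \<le> max (max C (ln K)) (4 * ln (\<bar>a\<bar> + \<bar>b\<bar> + 1))" for r
  proof (cases "x_double (of_int a) (of_int b) r")
    case None \<comment> \<open>2-torsion: x(2P) is the point at infinity, whose height is 0\<close>
    then have "r^3 + of_int a * r + of_int b = 0" by (simp add: x_double_def split: if_splits)
    then have "weil_height_rat r \<le> ln (\<bar>a\<bar> + \<bar>b\<bar> + 1)" by (rule weil_height_rat_cubic_root_le)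
    with None weil_height_rat_nonneg[of r] show ?thesis by (simp add: height_opt_def)
  next
    case (Some s)
    obtain p q where pq: "quotient_of r = (p, q)" by fastforce
    have "q > 0" and "coprime p q" and r: "r = of_int p / of_int q"
      using quotient_of_denom_pos[OF pq] quotient_of_coprime[OF pq] quotient_of_div[OF pq] by auto
    have "weil_height_rat r = ln (max \<bar>p\<bar> \<bar>q\<bar>)"
      using weil_height_rat_quotient_of[OF pq] \<open>q > 0\<close> by simp
    moreover have "p^3 + a*p*q^2 + b*q^3 \<noteq> 0" and "s = x_double_fraction a b p q"
      using Some \<open>q > 0\<close> unfolding r by (simp_all add: x_double_of_int_fraction split: if_splits)
    ultimately have "4 * weil_height_rat r - C \<le> weil_height_rat s"
      and "weil_height_rat s \<le> 4 * weil_height_rat r + ln K"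
      using C[OF \<open>coprime p q\<close>] weil_height_x_double_fraction_le[of q p a b, folded K_def] \<open>q > 0\<close>
      by simp_all
    moreover have "C \<le> max (max C (ln K)) (4 * ln (\<bar>a\<bar> + \<bar>b\<bar> + 1))"
      and "ln K \<le> max (max C (ln K)) (4 * ln (\<bar>a\<bar> + \<bar>b\<bar> + 1))" by simp_all
    ultimately show ?thesis unfolding Some height_opt_def option.case abs_le_iff by linarith
  qed
  with that show ?thesis by blast
qed

lemma tate_telescoping_limit:
  fixes H :: "nat \<Rightarrow> real" and d C :: real
  assumes "d > 1" and H: "\<And>n. \<bar>H (Suc n) - d * H n\<bar> \<le> C"
  obtains L where "(\<lambda>n. H n / d^n) \<longlonglongrightarrow> L" and "\<bar>L - H 0\<bar> \<le> C / (d - 1)"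
proof -
  define \<delta> where "\<delta> n = H (Suc n) / d^Suc n - H n / d^n" for n
  have \<delta>_le: "\<bar>\<delta> n\<bar> \<le> C / d * (1 / d)^n" for n
  proof -
    have "\<bar>\<delta> n\<bar> = \<bar>H (Suc n) - d * H n\<bar> / d^Suc n"
      using \<open>d > 1\<close> by (simp add: \<delta>_def field_simps)
    also have "\<dots> \<le> C / d^Suc n" using H[of n] \<open>d > 1\<close> by (simp add: divide_right_mono)
    finally show ?thesis by (simp add: power_divide)
  qed
  have geom: "(\<lambda>n. C / d * (1 / d)^n) sums (C / (d - 1))"
    using sums_mult[OF geometric_sums[of "1 / d"], of "C / d"] \<open>d > 1\<close> by (simp add: field_simps)
  have "summable (\<lambda>n. \<bar>\<delta> n\<bar>)"
    using \<delta>_le by (intro summable_comparison_test'[OF sums_summable[OF geom]]) auto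
  then have "summable \<delta>" by (rule summable_rabs_cancel)
  have "\<bar>suminf \<delta>\<bar> \<le> (\<Sum>n. \<bar>\<delta> n\<bar>)" by (rule summable_rabs) fact
  also have "\<dots> \<le> C / (d - 1)"
    using \<delta>_le geom \<open>summable (\<lambda>n. \<bar>\<delta> n\<bar>)\<close> by (metis sums_unique sums_summable suminf_le)
  finally have "\<bar>suminf \<delta>\<bar> \<le> C / (d - 1)" .
  moreover have "H n / d^n = H 0 + (\<Sum>k<n. \<delta> k)" for n
    by (induction n) (simp_all add: \<delta>_def)
  then have "(\<lambda>n. H n / d^n) \<longlonglongrightarrow> H 0 + suminf \<delta>"
    using summable_LIMSEQ[OF \<open>summable \<delta>\<close>] by (simp add: tendsto_add_const_iff)
  ultimately show ?thesis using that by simp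
qed

lemma canonical_height_limit:
  assumes "\<And>s. \<bar>height_opt (x_double a b s) - 4 * weil_height_rat s\<bar> \<le> C"
  shows "(\<lambda>n. height_opt (x_iter a b n r) / 4^n) \<longlonglongrightarrow> canonical_height a b r"
    and "\<bar>canonical_height a b r - weil_height_rat r\<bar> \<le> C / 3"
proof -
  define H where "H n = height_opt (x_iter a b n r)" for n
  have "0 \<le> C" using assms[of 0] by linarith
  have "\<bar>H (Suc n) - 4 * H n\<bar> \<le> C" for n
    using assms \<open>0 \<le> C\<close> by (cases "x_iter a b n r") (simp_all add: H_def height_opt_def)
  with tate_telescoping_limit[of 4 H C]
  obtain L where L: "(\<lambda>n. H n / 4^n) \<longlonglongrightarrow> L" and "\<bar>L - H 0\<bar> \<le> C / 3"
    by auto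
  moreover from L have "canonical_height a b r = L"
    unfolding canonical_height_def H_def by (rule limI)
  ultimately show "(\<lambda>n. height_opt (x_iter a b n r) / 4^n) \<longlonglongrightarrow> canonical_height a b r"
    and "\<bar>canonical_height a b r - weil_height_rat r\<bar> \<le> C / 3"
    by (simp_all add: H_def height_opt_def)
qed

lemma x_double_twist:
  assumes "D \<noteq> 0"
  shows "x_double (D^2 * a) (D^3 * b) (D * r) = map_option ((*) D) (x_double a b r)"
proof -
  have cubic: "(D*r)^3 + D^2*a*(D*r) + D^3*b = D^3 * (r^3 + a*r + b)"
    by (simp add: algebra_simps power3_eq_cube power2_eq_square)
  have quartic: "(D*r)^4 - 2*(D^2*a)*(D*r)^2 - 8*(D^3*b)*(D*r) + (D^2*a)^2
      = D^4 * (r^4 - 2*a*r^2 - 8*b*r + a^2)"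
    by (simp add: algebra_simps power2_eq_square power3_eq_cube power4_eq_xxxx)
  have "D^4 * N / (4 * (D^3 * Y)) = D * (N / (4 * Y))" for N Y
    using assms by (cases "Y = 0") (simp_all add: field_simps power3_eq_cube power4_eq_xxxx)
  then show ?thesis
    using assms unfolding x_double_def cubic quartic by simp
qed

lemma x_iter_twist:
  assumes "D \<noteq> 0"
  shows "x_iter (D^2 * a) (D^3 * b) n (D * r) = map_option ((*) D) (x_iter a b n r)"
proof (induction n)
  case (Suc n)
  then show ?case by (cases "x_iter a b n r") (simp_all add: x_double_twist[OF assms])
qed simp

lemma canonical_height_twist:
  assumes "D \<noteq> 0" and "convergent (\<lambda>n. height_opt (x_iter a b n r) / 4^n)"
  shows "canonical_height (D^2 * a) (D^3 * b) (D * r) = canonical_height a b r"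
proof -
  define H where "H n = height_opt (x_iter a b n r)" for n
  define T where "T n = height_opt (x_iter (D^2 * a) (D^3 * b) n (D * r))" for n
  have "\<bar>T n - H n\<bar> \<le> weil_height_rat D" for n
    using abs_weil_height_rat_mult_diff_le[OF assms(1)] weil_height_rat_nonneg[of D]
    by (cases "x_iter a b n r") (simp_all add: T_def H_def x_iter_twist[OF assms(1)] height_opt_def)
  then have bound: "norm (T n / 4^n - H n / 4^n) \<le> norm (weil_height_rat D * (1 / 4)^n) * 1" for n
    using weil_height_rat_nonneg[of D]
    by (simp add: power_divide flip: diff_divide_distrib) (simp add: divide_right_mono)
  have "(\<lambda>n. weil_height_rat D * (1 / 4)^n) \<longlonglongrightarrow> 0"
    by (intro tendsto_mult_right_zero LIMSEQ_power_zero) simp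
  then have "(\<lambda>n. T n / 4^n - H n / 4^n) \<longlonglongrightarrow> 0"
    by (rule tendsto_0_le) (use bound in \<open>blast intro: always_eventually\<close>)
  then have "(\<lambda>n. T n / 4^n - H n / 4^n + H n / 4^n) \<longlonglongrightarrow> 0 + lim (\<lambda>n. H n / 4^n)"
    using assms(2) unfolding H_def by (intro tendsto_add) (simp_all add: convergent_LIMSEQ_iff)
  then show ?thesis
    unfolding canonical_height_def T_def[symmetric] H_def[symmetric] by (simp add: limI)
qed

lemma canonical_height_twist_le:
  fixes A B :: int
  assumes "4*A^3 + 27*B^2 \<noteq> 0"
  obtains C where "\<And>D x :: int. D > 0 \<Longrightarrow>
    canonical_height (of_int (D^2 * A)) (of_int (D^3 * B)) (of_int x) \<le> ln (max \<bar>x\<bar> D) + C"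
proof -
  obtain C where C: "\<And>s. \<bar>height_opt (x_double (of_int A) (of_int B) s) - 4 * weil_height_rat s\<bar> \<le> C"
    using height_x_double_bound[OF assms] by blast
  have "canonical_height (of_int (D^2 * A)) (of_int (D^3 * B)) (of_int x) \<le> ln (max \<bar>x\<bar> D) + C / 3"
    if "D > 0" for D x :: int
  proof -
    define r :: rat where "r = of_int x / of_int D"
    have "convergent (\<lambda>n. height_opt (x_iter (of_int A) (of_int B) n r) / 4^n)"
      using canonical_height_limit(1)[OF C] by (rule convergentI)
    then have "canonical_height (of_int D^2 * of_int A) (of_int D^3 * of_int B) (of_int D * r)
        = canonical_height (of_int A) (of_int B) r"
      using \<open>D > 0\<close> by (intro canonical_height_twist) simp_all
    moreover have "of_int x = of_int D * r" using \<open>D > 0\<close> by (simp add: r_def)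
    ultimately have "canonical_height (of_int (D^2 * A)) (of_int (D^3 * B)) (of_int x)
        = canonical_height (of_int A) (of_int B) r"
      by simp
    also have "\<dots> \<le> weil_height_rat r + C / 3" using canonical_height_limit(2)[OF C, of r] by linarith
    also have "weil_height_rat r \<le> ln (max \<bar>x\<bar> D)"
      using weil_height_rat_of_int_fraction_le[of D x] \<open>D > 0\<close> by (simp add: r_def)
    finally show ?thesis by simp
  qed
  with that show ?thesis by blast
qed

lemma twist_integral_point_neg_x_le:
  fixes A B D x y :: int
  assumes "D > 0" and "y^2 = x^3 + D^2*A*x + D^3*B"
  shows "-x \<le> (\<bar>A\<bar> + \<bar>B\<bar> + 1) * D"
proof (cases "x < 0")
  case True
  define t where "t = - real_of_int x"
  define d where "d = real_of_int D"
  have "d > 0" "t > 0" using assms(1) True by (simp_all add: d_def t_def)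
  have "0 \<le> x^3 + D^2*A*x + D^3*B" by (simp flip: assms(2))
  then have "0 \<le> real_of_int (x^3 + D^2*A*x + D^3*B)" by (simp only: of_int_0_le_iff)
  then have "0 \<le> real_of_int x^3 + d^2 * real_of_int A * real_of_int x + d^3 * real_of_int B"
    unfolding d_def by simp
  then have "t^3 \<le> d^2 * (- real_of_int A * t) + d^3 * real_of_int B"
    unfolding t_def by (simp add: power3_eq_cube)
  also have "\<dots> \<le> d^2 * (\<bar>real_of_int A\<bar> * t) + d^3 * \<bar>real_of_int B\<bar>"
    using \<open>d > 0\<close> \<open>t > 0\<close> by (intro add_mono mult_left_mono mult_right_mono) auto
  finally have "(t / d)^3 \<le> \<bar>real_of_int A\<bar> * (t / d) + \<bar>real_of_int B\<bar>"
    using \<open>d > 0\<close> by (simp add: field_simps power3_eq_cube power2_eq_square)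
  then have "t / d \<le> \<bar>real_of_int A\<bar> + \<bar>real_of_int B\<bar> + 1" by (rule cubic_le_imp_le[rotated 2]) simp_all
  then have "real_of_int (-x) \<le> real_of_int ((\<bar>A\<bar> + \<bar>B\<bar> + 1) * D)"
    using \<open>d > 0\<close> unfolding t_def d_def by (simp add: field_simps)
  then show ?thesis by (simp only: of_int_le_iff)
next
  case False
  moreover have "0 \<le> (\<bar>A\<bar> + \<bar>B\<bar> + 1) * D" using assms(1) by simp
  ultimately show ?thesis by linarith
qed

lemma twist_integral_point_abs_x_le:
  fixes A B D M x y :: int
  assumes "D > 0" and "y^2 = x^3 + D^2*A*x + D^3*B" and "x \<le> M * D"
  shows "max \<bar>x\<bar> D \<le> max M (\<bar>A\<bar> + \<bar>B\<bar> + 1) * D"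
proof -
  have "M * D \<le> max M (\<bar>A\<bar> + \<bar>B\<bar> + 1) * D" "(\<bar>A\<bar> + \<bar>B\<bar> + 1) * D \<le> max M (\<bar>A\<bar> + \<bar>B\<bar> + 1) * D"
    "D \<le> (\<bar>A\<bar> + \<bar>B\<bar> + 1) * D"
    using \<open>D > 0\<close> by simp_all
  with twist_integral_point_neg_x_le[OF assms(1,2)] \<open>x \<le> M * D\<close> show ?thesis by (simp add: abs_le_iff)
qed

theorem lemma6p1:
  fixes A B M :: int
  assumes "4 * A^3 + 27 * B^2 \<noteq> 0"
    and "M > 0"
    and "max (10 * sqrt \<bar>real_of_int A\<bar>) (5 * root 3 \<bar>real_of_int B\<bar>) \<le> real_of_int M"
  shows "\<exists>D0 :: int. \<forall>D :: int. squarefree D \<and> D \<ge> D0 \<longrightarrow>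
           (\<forall>x y :: int. y^2 = x^3 + D^2 * A * x + D^3 * B \<and> x \<le> M * D \<longrightarrow>
              canonical_height (of_int (D^2 * A)) (of_int (D^3 * B)) (of_int x)
                < 1.5 * ln (real_of_int D))"
proof -
  obtain C where C: "\<And>D x :: int. D > 0 \<Longrightarrow>
      canonical_height (of_int (D^2 * A)) (of_int (D^3 * B)) (of_int x) \<le> ln (max \<bar>x\<bar> D) + C"
    using canonical_height_twist_le[OF assms(1)] by blast
  define K where "K = max M (\<bar>A\<bar> + \<bar>B\<bar> + 1)"
  define D0 where "D0 = \<lceil>exp (2 * (ln K + C))\<rceil> + 1"
  show ?thesis
  proof (intro exI[of _ D0] allI impI, elim conjE)
    fix D x y :: int
    assume "D0 \<le> D" and curve: "y^2 = x^3 + D^2 * A * x + D^3 * B" and "x \<le> M * D"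
    then have "exp (2 * (ln K + C)) < D" unfolding D0_def by linarith
    then have "D > 0" and ln_D: "2 * (ln K + C) < ln D"
      using order.strict_trans[OF exp_gt_zero] ln_strict_mono[OF _ exp_gt_zero] by fastforce+
    have "max \<bar>x\<bar> D \<le> K * D" and "0 < max \<bar>x\<bar> D"
      using twist_integral_point_abs_x_le[OF \<open>D > 0\<close> curve \<open>x \<le> M * D\<close>] \<open>D > 0\<close> by (simp_all add: K_def)
    then have "ln (max \<bar>x\<bar> D) \<le> ln (K * D)"
      by (intro ln_mono) (simp_all only: of_int_le_iff of_int_0_less_iff)
    also have "\<dots> = ln K + ln D" using \<open>D > 0\<close> by (simp add: K_def ln_mult)
    finally show "canonical_height (of_int (D^2 * A)) (of_int (D^3 * B)) (of_int x) < 1.5 * ln D"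
      using C[OF \<open>D > 0\<close>, of x] ln_D by simp
  qed
qed

end
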